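(* Let $\mathbb{M}=(a,b,[a],[b],[b^{-1}])$ be a Markov system of multiplicity $k$, and let $I_1,I_1',\dots,I_k,I_k'$, $b_1,\dots,b_k$ and $f_1=a\circ b_k\circ a\circ b_{k-1}\circ\cdots\circ a\circ b_1$ be as in the context. Then the stabilizer $\{g\in\mathbb{G}(\mathbb{M})\mid g(I_1)=I_1\}$ is infinite cyclic, generated by $f_1$.
   Context: A Markov system is a tuple $(a,b,[a],[b],[b^{-1}])$ with $a$ an orientation-preserving involution of $S^1$, $b$ an orientation-preserving homeomorphism of $S^1$ of period three, and $[a],[b],[b^{-1}]\subset S^1$ such that: (A) they are pairwise disjoint, each a union of $k$ disjoint closed intervals ($k\in\mathbb{N}$, the multiplicity); components are $a$-, $b$-, $b^{-1}$-intervals; $X=[a]\cup[b]\cup[b^{-1}]$; (B) no two $a$-intervals are consecutive among the components of $X$ in circular order; likewise for $b$- and for $b^{-1}$-intervals; with principal gaps (gaps of $X$ between an $a$-interval and a $b^{\pm1}$-interval), complementary gaps (between a $b$- and a $b^{-1}$-interval), $b$-blocks (maximal intervals made of $b^{\pm1}$-intervals and complementary gaps) and $[[b]]$ the union of $b$-blocks: (C) $a([a])=[[b]]$; (D) $b([a])=[b]$, $b([b])=[b^{-1}]$; (E) $a$ maps principal gaps to principal gaps and exactly one of $b^{\pm1}$ maps a given principal gap to a principal gap; the graph on principal gaps joining $J$ to $a(J)$ and to that image is connected. By (E) the principal gaps can be enumerated $I_1,I_1',I_2,I_2',\dots,I_k,I_k'$ so that for each $i$ there is $b_i\in\{b,b^{-1}\}$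 with $b_i(I_i)=I_i'$ and $a(I_i')=I_{i+1}$ (indices mod $k$). $\mathbb{G}(\mathbb{M})$ is the subgroup of $\mathrm{Homeo}_+(S^1)$ generated by $a$ and $b$. *)

theory Defs
  imports "HOL-Analysis.Analysis"
begin

definition circle :: "complex set" where
  "circle = {z. cmod z = 1}"

definition cover :: "real \<Rightarrow> complex" where
  "cover x = cis (2 * pi * x)"

definition homeo_plus :: "(complex \<Rightarrow> complex) \<Rightarrow> bool" where
  "homeo_plus f \<longleftrightarrow> (\<exists>F::real \<Rightarrow> real. continuous_on UNIV F \<and> strict_mono F \<and>
      (\<forall>x. F (x + 1) = F x + 1) \<and> (\<forall>x. f (cover x) = cover (F x)))"

definition closed_arc :: "complex set \<Rightarrow> bool" where
  "closed_arc C \<longleftrightarrow> (\<exists>s t. s < t \<and> t < s + 1 \<and> C = cover ` {s..t})"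

definition union_of_closed_arcs :: "complex set \<Rightarrow> nat \<Rightarrow> bool" where
  "union_of_closed_arcs A k \<longleftrightarrow> (\<exists>C :: nat \<Rightarrow> complex set.
      (\<forall>i<k. closed_arc (C i)) \<and> (\<forall>i<k. \<forall>j<k. i \<noteq> j \<longrightarrow> C i \<inter> C j = {}) \<and>
      A = (\<Union>i<k. C i))"

definition gaps :: "complex set \<Rightarrow> complex set set" where
  "gaps X = components (circle - X)"

definition between :: "complex set \<Rightarrow> complex set \<Rightarrow> complex set \<Rightarrow> bool" where
  "between J C D \<longleftrightarrow> closure J \<inter> C \<noteq> {} \<and> closure J \<inter> D \<noteq> {}"

definition consecutive :: "complex set \<Rightarrow> complex set \<Rightarrow> complex set \<Rightarrow> bool" where
  "consecutive X C D \<longleftrightarrow> C \<in> components X \<and> D \<in> components X \<and> C \<noteq> D \<and>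
      (\<exists>J\<in>gaps X. between J C D)"

definition principal_gap :: "complex set \<Rightarrow> complex set \<Rightarrow> complex set \<Rightarrow> complex set \<Rightarrow> bool" where
  "principal_gap A B Bi J \<longleftrightarrow> J \<in> gaps (A \<union> B \<union> Bi) \<and>
      (\<exists>C\<in>components A. \<exists>D\<in>components B \<union> components Bi. between J C D)"

definition complementary_gap :: "complex set \<Rightarrow> complex set \<Rightarrow> complex set \<Rightarrow> complex set \<Rightarrow> bool" where
  "complementary_gap A B Bi J \<longleftrightarrow> J \<in> gaps (A \<union> B \<union> Bi) \<and>
      (\<exists>C\<in>components B. \<exists>D\<in>components Bi. between J C D)"

definition bblocks_union :: "complex set \<Rightarrow> complex set \<Rightarrow> complex set \<Rightarrow> complex set" where
  "bblocks_union A B Bi = B \<union> Bi \<union> \<Union>{J. complementary_gap A B Bi J}"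

definition gap_graph :: "(complex \<Rightarrow> complex) \<Rightarrow> (complex \<Rightarrow> complex) \<Rightarrow>
    complex set \<Rightarrow> complex set \<Rightarrow> complex set \<Rightarrow> (complex set \<times> complex set) set" where
  "gap_graph a b A B Bi =
     {(J, a ` J) | J. principal_gap A B Bi J} \<union>
     {(J, c ` J) | J c. principal_gap A B Bi J \<and> c \<in> {b, inv_into circle b} \<and>
                        principal_gap A B Bi (c ` J)}"

definition markov_system :: "(complex \<Rightarrow> complex) \<Rightarrow> (complex \<Rightarrow> complex) \<Rightarrow>
    complex set \<Rightarrow> complex set \<Rightarrow> complex set \<Rightarrow> nat \<Rightarrow> bool" where
  "markov_system a b A B Bi k \<longleftrightarrow>
     homeo_plus a \<and> homeo_plus b \<and>
     (\<forall>z\<in>circle. a (a z) = z) \<and> (\<exists>z\<in>circle. a z \<noteq> z) \<and>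
     (\<forall>z\<in>circle. b (b (b z)) = z) \<and> (\<exists>z\<in>circle. b z \<noteq> z) \<and>
     \<comment> \<open>(A)\<close>
     k \<ge> 1 \<and>
     union_of_closed_arcs A k \<and> union_of_closed_arcs B k \<and> union_of_closed_arcs Bi k \<and>
     A \<inter> B = {} \<and> A \<inter> Bi = {} \<and> B \<inter> Bi = {} \<and>
     \<comment> \<open>(B)\<close>
     (\<forall>C D. consecutive (A \<union> B \<union> Bi) C D \<longrightarrow>
        \<not> (C \<in> components A \<and> D \<in> components A) \<and>
        \<not> (C \<in> components B \<and> D \<in> components B) \<and>
        \<not> (C \<in> components Bi \<and> D \<in> components Bi)) \<and>
     \<comment> \<open>(C)\<close>
     a ` A = bblocks_union A B Bi \<and>
     \<comment> \<open>(D)\<close>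
     b ` A = B \<and> b ` B = Bi \<and>
     \<comment> \<open>(E)\<close>
     (\<forall>J. principal_gap A B Bi J \<longrightarrow> principal_gap A B Bi (a ` J)) \<and>
     (\<forall>J. principal_gap A B Bi J \<longrightarrow>
        (principal_gap A B Bi (b ` J) \<noteq> principal_gap A B Bi (inv_into circle b ` J))) \<and>
     (\<forall>J J'. principal_gap A B Bi J \<longrightarrow> principal_gap A B Bi J' \<longrightarrow>
        (J, J') \<in> (gap_graph a b A B Bi \<union> (gap_graph a b A B Bi)\<inverse>)\<^sup>*)"

text \<open>The group generated by a and b (as maps; elements are compared on S^1).\<close>

inductive_set gen_group :: "(complex \<Rightarrow> complex) \<Rightarrow> (complex \<Rightarrow> complex) \<Rightarrow> (complex \<Rightarrow> complex) set"
  for a b where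
    gen_id: "id \<in> gen_group a b"
  | gen_a: "g \<in> gen_group a b \<Longrightarrow> a \<circ> g \<in> gen_group a b"
  | gen_b: "g \<in> gen_group a b \<Longrightarrow> b \<circ> g \<in> gen_group a b"
  | gen_ainv: "g \<in> gen_group a b \<Longrightarrow> inv_into circle a \<circ> g \<in> gen_group a b"
  | gen_binv: "g \<in> gen_group a b \<Longrightarrow> inv_into circle b \<circ> g \<in> gen_group a b"

text \<open>markov_word a bs n = a o bs(n-1) o a o ... o a o bs 0; f_1 = markov_word a bs k.\<close>

fun markov_word :: "(complex \<Rightarrow> complex) \<Rightarrow> (nat \<Rightarrow> complex \<Rightarrow> complex) \<Rightarrow> nat \<Rightarrow> complex \<Rightarrow> complex" where
  "markov_word a bs 0 = id"
| "markov_word a bs (Suc n) = (a \<circ> bs n) \<circ> markov_word a bs n"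

definition int_pow :: "(complex \<Rightarrow> complex) \<Rightarrow> int \<Rightarrow> complex \<Rightarrow> complex" where
  "int_pow f n = (if 0 \<le> n then f ^^ nat n else inv_into circle f ^^ nat (- n))"

end

theory Submission
  imports Defs "HOL-Algebra.Bij" "HOL-Algebra.Multiplicative_Group"
begin

text \<open>Every element of \<open>\<G>(\<M>)\<close> acts on \<open>S\<^sup>1\<close> like a reduced word in which \<open>a\<close> alternates with
  \<open>b\<^sup>\<plusminus>\<^sup>1\<close>. The proof is a ping-pong argument with the sets \<open>[a]\<close> and \<open>Z\<close>, the complement of
  \<open>[a]\<close> and of the principal gaps: by (C) the involution \<open>a\<close> maps \<open>Z\<close> into \<open>[a]\<close>, and by (D) the maps
  \<open>b\<^sup>\<plusminus>\<^sup>1\<close> send \<open>[a]\<close> into \<open>Z\<close>. At each principal gap of the cycle \<open>I\<^sub>1, I\<^sub>1', \<dots>, I\<^sub>k, I\<^sub>k'\<close> one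
  letter moves one step forward along the cycle, one moves one step back, and by (E) the remaining
  letter throws the gap into \<open>Z\<close>. Hence a reduced word applied to \<open>I\<^sub>1\<close> either walks along the
  cycle or ends up in \<open>[a]\<close> or \<open>Z\<close>, away from all principal gaps. A word fixing \<open>I\<^sub>1\<close> must
  therefore walk a whole number of times around the cycle, i.e. be a power of \<open>f\<^sub>1\<close>; and no
  nontrivial power of \<open>f\<^sub>1\<close> is the identity, since as a word it cannot fix \<open>I\<^sub>1'\<close>.\<close>

section \<open>The circle and its covering map\<close>

lemma cover_in_circle [simp]: "cover x \<in> circle"
  by (simp add: cover_def circle_def)

lemma circle_imp_cover: "z \<in> circle \<Longrightarrow> \<exists>x. z = cover x"
proof -
  assume "z \<in> circle"
  then have "z \<noteq> 0" "cmod z = 1" by (auto simp: circle_def)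
  then have "cis (Arg z) = z" using cis_Arg by (simp add: sgn_div_norm)
  then show ?thesis
    by (intro exI[of _ "Arg z / (2 * pi)"]) (simp add: cover_def)
qed

lemma cover_eq_iff: "cover x = cover y \<longleftrightarrow> (\<exists>n::int. x = y + n)"
proof -
  have "cover x = cover y \<longleftrightarrow>
      exp (\<i> * complex_of_real (2*pi*x)) = exp (\<i> * complex_of_real (2*pi*y))"
    by (simp add: cover_def cis_conv_exp)
  also have "\<dots> \<longleftrightarrow> (\<exists>n::int. \<i> * complex_of_real (2*pi*x)
      = \<i> * complex_of_real (2*pi*y) + (of_int (2 * n) * pi) * \<i>)"
    by (rule exp_eq)
  also have "\<dots> \<longleftrightarrow> (\<exists>n::int. x = y + n)"
  proof (intro ex_cong1)
    fix n :: int
    have "\<i> * complex_of_real (2*pi*x) = \<i> * complex_of_real (2*pi*y) + (of_int (2 * n) * pi) * \<i>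
        \<longleftrightarrow> \<i> * complex_of_real (2*pi*x) = \<i> * complex_of_real (2*pi*(y + n))"
      by (simp add: algebra_simps)
    also have "\<dots> \<longleftrightarrow> complex_of_real (2*pi*x) = complex_of_real (2*pi*(y + n))"
      by (simp only: mult_cancel_left) simp
    also have "\<dots> \<longleftrightarrow> x = y + n"
      by (simp only: of_real_eq_iff) simp
    finally show "(\<i> * complex_of_real (2*pi*x)
        = \<i> * complex_of_real (2*pi*y) + (of_int (2 * n) * pi) * \<i>) = (x = y + n)" .
  qed
  finally show ?thesis .
qed

lemma cover_add_of_int [simp]: "cover (x + of_int n) = cover x"
  using cover_eq_iff by blast

lemma cover_add_1 [simp]: "cover (x + 1) = cover x"
  using cover_add_of_int[of x 1] by simp

lemma continuous_on_cover: "continuous_on S cover"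
  unfolding cover_def by (intro continuous_intros)

lemma cover_into_period:
  obtains y' where "cover y' = cover y" "l \<le> y'" "y' < l + 1"
proof
  show "cover (y + of_int (- \<lfloor>y - l\<rfloor>)) = cover y" by (rule cover_add_of_int)
qed linarith+

lemma inj_on_cover: "q < p + 1 \<Longrightarrow> inj_on cover {p..q}"
proof (rule inj_onI)
  fix x y assume xy: "q < p + 1" "x \<in> {p..q}" "y \<in> {p..q}" "cover x = cover y"
  then obtain n :: int where n: "x = y + n" using cover_eq_iff by blast
  then have "\<bar>real_of_int n\<bar> < 1" using xy by auto
  then have "n = 0" by linarith
  then show "x = y" using n by simp
qed

lemma cover_image_unit_interval: "cover ` {0..1} = circle"
proof
  show "circle \<subseteq> cover ` {0..1}"
  proof
    fix z assume "z \<in> circle"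
    then obtain x where "z = cover x" using circle_imp_cover by blast
    moreover obtain y where "cover y = cover x" "0 \<le> y" "y < 0 + 1"
      by (rule cover_into_period)
    ultimately show "z \<in> cover ` {0..1}" by (metis atLeastAtMost_iff add_0 image_eqI less_eq_real_def)
  qed
qed auto

lemma homeo_plus_in_circle: "homeo_plus f \<Longrightarrow> z \<in> circle \<Longrightarrow> f z \<in> circle"
  unfolding homeo_plus_def using circle_imp_cover cover_in_circle by metis

text \<open>The circle carries the quotient topology of \<open>cover\<close> restricted to \<open>[0,1]\<close>, and
  \<open>f \<circ> cover = cover \<circ> F\<close> is continuous there.\<close>

lemma continuous_on_circle_homeo_plus:
  assumes "homeo_plus f"
  shows "continuous_on circle f"
proof -
  obtain F where F: "continuous_on UNIV F" "\<forall>x. f (cover x) = cover (F x)"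
    using assms unfolding homeo_plus_def by blast
  have quotient: "openin (top_of_set {0..1}) ({0..1} \<inter> cover -` V) \<longleftrightarrow> openin (top_of_set circle) V"
    if "V \<subseteq> circle" for V
    using Abstract_Topology_2.continuous_imp_quotient_map[OF continuous_on_cover cover_image_unit_interval compact_Icc that] .
  have "continuous_on {0..1} (cover \<circ> F)"
    by (intro continuous_on_compose continuous_on_cover continuous_on_subset[OF F(1)]) auto
  then have "openin (top_of_set {0..1}) ({0..1} \<inter> (cover \<circ> F) -` U)"
    if "openin (top_of_set circle) U" for U
    using that continuous_on_open_gen[of "cover \<circ> F" "{0..1}" circle] by auto
  moreover have "{0..1} \<inter> cover -` (circle \<inter> f -` U) = {0..1} \<inter> (cover \<circ> F) -` U" for U
    using F(2) by auto
  ultimately show ?thesis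
    using homeo_plus_in_circle[OF assms] quotient[of "circle \<inter> f -` _"]
    by (subst continuous_on_open_gen[where T = circle]) (auto simp del: vimage_Int)
qed

lemma closed_arc_subset_circle: "closed_arc C \<Longrightarrow> C \<subseteq> circle"
  unfolding closed_arc_def by auto

lemma compact_closed_arc: "closed_arc C \<Longrightarrow> compact C"
  unfolding closed_arc_def by (auto intro!: compact_continuous_image continuous_on_cover)

lemma union_of_closed_arcs_subset_circle: "union_of_closed_arcs S k \<Longrightarrow> S \<subseteq> circle"
  unfolding union_of_closed_arcs_def using closed_arc_subset_circle by blast

lemma closed_union_of_closed_arcs: "union_of_closed_arcs S k \<Longrightarrow> closed S"
  unfolding union_of_closed_arcs_def
  using compact_closed_arc by (metis compact_UN compact_imp_closed finite_lessThan lessThan_iff)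

lemma union_of_closed_arcs_nonempty: "union_of_closed_arcs S k \<Longrightarrow> 1 \<le> k \<Longrightarrow> S \<noteq> {}"
  unfolding union_of_closed_arcs_def closed_arc_def by fastforce

lemma connected_component_set_Un_closed:
  assumes "closed S" "closed T" "S \<inter> T = {}" "x \<in> S"
  shows "connected_component_set (S \<union> T) x = connected_component_set S x"
proof
  let ?K = "connected_component_set (S \<union> T) x"
  have "\<not> (T \<inter> ?K \<noteq> {} \<and> S \<inter> ?K \<noteq> {})"
    using connected_connected_component[of "S \<union> T" x] connected_component_subset[of "S \<union> T" x] assms
    unfolding connected_closed by blast
  then have "?K \<subseteq> S"
    using connected_component_subset[of "S \<union> T" x] assms(4) by auto
  then show "?K \<subseteq> connected_component_set S x"
    using assms(4) by (intro connected_component_maximal) auto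
qed (rule connected_component_mono, auto)

lemma components_Un_closed:
  assumes "closed S" "closed T" "S \<inter> T = {}" "C \<in> components (S \<union> T)"
  shows "C \<in> components S \<or> C \<in> components T"
proof -
  obtain x where x: "x \<in> S \<union> T" "C = connected_component_set (S \<union> T) x"
    using assms(4) by (auto simp: components_def)
  then show ?thesis
    using connected_component_set_Un_closed[OF assms(1-3)]
      connected_component_set_Un_closed[OF assms(2,1)] assms(3)
    by (auto simp: components_def Un_commute Int_commute)
qed

lemma image_in_components:
  assumes "continuous_on U f" "continuous_on U g" "f ` T \<subseteq> T" "g ` T \<subseteq> T" "T \<subseteq> U"
    and "\<And>z. z \<in> U \<Longrightarrow> g (f z) = z" "\<And>z. z \<in> U \<Longrightarrow> f (g z) = z"
    and G: "G \<in> components T"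
  shows "f ` G \<in> components T"
proof -
  have GT: "G \<subseteq> T" using G in_components_subset by blast
  have "connected (f ` G)"
    using connected_continuous_image[OF continuous_on_subset[OF assms(1)] in_components_connected[OF G]]
      GT assms(5) by blast
  then obtain G' where G': "G' \<in> components T" "f ` G \<subseteq> G'"
    using exists_component_superset[of "f ` G" T] GT assms(3) in_components_nonempty[OF G] by blast
  have G'T: "G' \<subseteq> T" using G' in_components_subset by blast
  have "connected (g ` G')"
    using connected_continuous_image[OF continuous_on_subset[OF assms(2)] in_components_connected[OF G'(1)]]
      G'T assms(5) by blast
  moreover have "G \<inter> g ` G' \<noteq> {}"
    using in_components_nonempty[OF G] G' GT assms(5,6) by force
  ultimately have "g ` G' \<subseteq> G"
    using components_maximal[OF G] assms(4) G'T by blast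
  then have "G' \<subseteq> f ` G"
    using G'T assms(5,7) by (force simp: image_def)
  then show ?thesis using G' by (simp add: subset_antisym)
qed

section \<open>Gaps of a closed subset of the circle\<close>

lemma gap_around_point:
  assumes X: "closed X" "X \<noteq> {}" "X \<subseteq> circle" and x0: "cover x0 \<notin> X"
  obtains l u where "l < x0" "x0 < u" "u \<le> l + 1" "cover l \<in> X" "cover u \<in> X"
    "\<And>t. l < t \<Longrightarrow> t < u \<Longrightarrow> cover t \<notin> X"
proof -
  define T where "T = cover -` X"
  have "closed T" unfolding T_def by (rule closed_vimage[OF X(1) continuous_on_cover])
  obtain s where "cover s \<in> X" using X(2,3) circle_imp_cover by blast
  then obtain s' where s': "s' \<in> T" "x0 \<le> s'" "s' < x0 + 1"
    using cover_into_period[of s x0] unfolding T_def by (metis vimageI2)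
  then have s'1: "s' - 1 \<in> T" unfolding T_def using cover_add_of_int[of "s' - 1" 1] by simp
  define u where "u = Inf (T \<inter> {x0..})"
  define l where "l = Sup (T \<inter> {..x0})"
  have above: "bdd_below (T \<inter> {x0..})" and below: "bdd_above (T \<inter> {..x0})"
    by (auto intro: bdd_belowI bdd_aboveI)
  have uT: "u \<in> T \<inter> {x0..}" unfolding u_def
    using s' \<open>closed T\<close> by (intro closed_contains_Inf above) auto
  have lT: "l \<in> T \<inter> {..x0}" unfolding l_def
    using s' s'1 \<open>closed T\<close> by (intro closed_contains_Sup below) auto
  have x0T: "x0 \<notin> T" using x0 T_def by simp
  have "u \<le> s'" unfolding u_def using s' by (intro cInf_lower above) auto
  moreover have "s' - 1 \<le> l" unfolding l_def using s' s'1 by (intro cSup_upper below) auto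
  moreover have "t \<notin> T" if "l < t" "t < u" for t
    using cInf_lower[OF _ above, of t] cSup_upper[OF _ below, of t] that
    unfolding u_def l_def by (cases "t \<le> x0") auto
  ultimately show ?thesis
    using that[of l u] uT lT x0T unfolding T_def by (auto simp: le_less)
qed

lemma circle_minus_open_arc:
  assumes "l < u" "u \<le> l + 1"
  shows "circle - cover ` {l<..<u} \<subseteq> cover ` {u..l+1}"
proof
  fix w assume w: "w \<in> circle - cover ` {l<..<u}"
  then obtain y where "w = cover y" using circle_imp_cover by blast
  then obtain y' where y': "w = cover y'" "l \<le> y'" "y' < l + 1"
    using cover_into_period[of y l] by metis
  show "w \<in> cover ` {u..l+1}"
  proof (cases "y' = l")
    case True
    then show ?thesis using y' assms by (intro image_eqI[of _ _ "l + 1"]) auto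
  next
    case False
    then have "u \<le> y'" using w y' by force
    then show ?thesis using y' by auto
  qed
qed

lemma closed_arc_subset_connected:
  assumes C: "connected C" "C \<subseteq> cover ` {u..v}" and uv: "u \<le> v" "v < u + 1"
    and ends: "cover u \<in> C" "cover v \<in> C"
  shows "cover ` {u..v} \<subseteq> C"
proof -
  obtain g where g: "homeomorphism {u..v} (cover ` {u..v}) cover g"
    using homeomorphism_compact[OF compact_Icc continuous_on_cover refl inj_on_cover[OF uv(2)]] by blast
  have "connected (g ` C)"
    using connected_continuous_image[OF continuous_on_subset[OF homeomorphism_cont2[OF g] C(2)] C(1)] .
  moreover have "u \<in> g ` C" "v \<in> g ` C"
    using ends homeomorphism_apply1[OF g, of u] homeomorphism_apply1[OF g, of v] uv
    by (auto intro: rev_image_eqI)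
  ultimately have "{u..v} \<subseteq> g ` C" by (rule connected_contains_Icc)
  then show ?thesis
    using homeomorphism_apply2[OF g] C(2) by force
qed

text \<open>A gap of a disconnected closed set \<open>X\<close> is an open arc whose two ends lie in \<open>X\<close>; they lie in
  different components of \<open>X\<close>, for otherwise that component would contain the complementary
  closed arc and with it all of \<open>X\<close>.\<close>

lemma gap_between_components:
  assumes X: "X \<subseteq> circle" "closed X" "\<not> connected X" and G: "G \<in> components (circle - X)"
  shows "\<exists>C\<in>components X. \<exists>D\<in>components X. C \<noteq> D \<and> closure G \<inter> C \<noteq> {} \<and> closure G \<inter> D \<noteq> {}"
proof -
  obtain z where zG: "z \<in> G" using G in_components_nonempty by blast
  have GX: "G \<subseteq> circle - X" using G in_components_subset by blast
  then obtain x0 where x0: "z = cover x0" using zG circle_imp_cover by blast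
  obtain l u where lu: "l < x0" "x0 < u" "u \<le> l + 1" "cover l \<in> X" "cover u \<in> X"
    and gap: "\<And>t. l < t \<Longrightarrow> t < u \<Longrightarrow> cover t \<notin> X"
    using gap_around_point[OF X(2) _ X(1)] X(3) x0 zG GX by (metis Diff_iff connected_empty subsetD)
  define arc where "arc = cover ` {l<..<u}"
  have arcX: "arc \<inter> X = {}" unfolding arc_def using gap by auto
  have "connected arc"
    unfolding arc_def by (intro connected_continuous_image continuous_on_cover) auto
  moreover have "z \<in> arc" unfolding arc_def using x0 lu by auto
  moreover have "arc \<subseteq> circle - X" using arcX unfolding arc_def by auto
  ultimately have "arc \<subseteq> G"
    using components_maximal[OF G] zG by blast
  moreover have "cover ` closure {l<..<u} \<subseteq> closure arc"
    by (rule image_closure_subset[OF continuous_on_cover]) (auto simp: arc_def intro: closure_subset[THEN subsetD])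
  ultimately have ends: "cover l \<in> closure G" "cover u \<in> closure G"
    using lu closure_mono[of arc G] by (auto 4 3)
  define C where "C = connected_component_set X (cover l)"
  define D where "D = connected_component_set X (cover u)"
  have "C \<noteq> D"
  proof
    assume "C = D"
    have X_arc: "X \<subseteq> cover ` {u..l+1}"
      using circle_minus_open_arc[OF _ lu(3), folded arc_def] lu(1,2) X(1) arcX by force
    have C_X: "C \<subseteq> X" unfolding C_def by (rule connected_component_subset)
    have "connected C" unfolding C_def by simp
    moreover have "cover u \<in> C"
      using \<open>C = D\<close> lu unfolding D_def by simp
    moreover have "cover (l + 1) \<in> C"
      using lu unfolding C_def by simp
    ultimately have "cover ` {u..l+1} \<subseteq> C"
      using C_X X_arc lu by (intro closed_arc_subset_connected) auto
    then have "X = C" using X_arc C_X by blast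
    then show False using X(3) \<open>connected C\<close> by simp
  qed
  moreover have "C \<in> components X" "D \<in> components X"
    unfolding C_def D_def using lu by (simp_all add: componentsI)
  moreover have "cover l \<in> C" "cover u \<in> D"
    unfolding C_def D_def using lu by simp_all
  ultimately show ?thesis
    using ends by blast
qed

section \<open>Consequences of the axioms of a Markov system\<close>

locale markov =
  fixes a b :: "complex \<Rightarrow> complex" and A B Bi :: "complex set" and k :: nat
  assumes markov_system: "markov_system a b A B Bi k"
begin

abbreviation "bi \<equiv> inv_into circle b"

definition X :: "complex set" where
  "X = A \<union> B \<union> Bi"

definition principal_gaps :: "complex set set" where
  "principal_gaps = {J. principal_gap A B Bi J}"

definition Z :: "complex set" where
  "Z = circle - A - \<Union>principal_gaps"

lemma homeo_plus_a: "homeo_plus a" and homeo_plus_b: "homeo_plus b"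
  using markov_system unfolding markov_system_def by auto

lemma a_in_circle: "z \<in> circle \<Longrightarrow> a z \<in> circle"
  using homeo_plus_in_circle homeo_plus_a by blast

lemma b_in_circle: "z \<in> circle \<Longrightarrow> b z \<in> circle"
  using homeo_plus_in_circle homeo_plus_b by blast

lemma a_a: "z \<in> circle \<Longrightarrow> a (a z) = z"
  using markov_system unfolding markov_system_def by auto

lemma b_b_b: "z \<in> circle \<Longrightarrow> b (b (b z)) = z"
  using markov_system unfolding markov_system_def by auto

lemma inj_on_a: "inj_on a circle"
  by (metis a_a inj_onI)

lemma inj_on_b: "inj_on b circle"
  by (metis b_b_b inj_onI)

lemma bi_eq: "z \<in> circle \<Longrightarrow> bi z = b (b z)"
  by (rule inv_into_f_eq[OF inj_on_b]) (auto simp: b_in_circle b_b_b)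

lemma bi_in_circle: "z \<in> circle \<Longrightarrow> bi z \<in> circle"
  using bi_eq b_in_circle by simp

lemma b_bi: "z \<in> circle \<Longrightarrow> b (bi z) = z" and bi_b: "z \<in> circle \<Longrightarrow> bi (b z) = z"
  using bi_eq b_b_b b_in_circle by simp_all

lemma inv_into_a: "z \<in> circle \<Longrightarrow> inv_into circle a z = a z"
  by (rule inv_into_f_eq[OF inj_on_a]) (auto simp: a_in_circle a_a)

lemma k_ge_1: "1 \<le> k"
  using markov_system unfolding markov_system_def by auto

lemma union_of_closed_arcs: "union_of_closed_arcs A k" "union_of_closed_arcs B k" "union_of_closed_arcs Bi k"
  using markov_system unfolding markov_system_def by auto

lemma A_subset_circle: "A \<subseteq> circle" and B_subset_circle: "B \<subseteq> circle" and Bi_subset_circle: "Bi \<subseteq> circle"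
  using union_of_closed_arcs union_of_closed_arcs_subset_circle by auto

lemma closed_A: "closed A" and closed_B: "closed B" and closed_Bi: "closed Bi"
  using union_of_closed_arcs closed_union_of_closed_arcs by auto

lemma disjoint: "A \<inter> B = {}" "A \<inter> Bi = {}" "B \<inter> Bi = {}"
  using markov_system unfolding markov_system_def by auto

lemma a_A: "a ` A = bblocks_union A B Bi"
  using markov_system unfolding markov_system_def by auto

lemma b_A: "b ` A = B" and b_B: "b ` B = Bi"
  using markov_system unfolding markov_system_def by auto

lemma b_Bi: "b ` Bi = A"
proof -
  have "b ` Bi = (\<lambda>z. b (b (b z))) ` A" using b_A b_B by (auto simp: image_image[symmetric])
  also have "\<dots> = A" using b_b_b A_subset_circle by (force simp: image_def)
  finally show ?thesis .
qed

lemma bi_image_b_image: "S \<subseteq> circle \<Longrightarrow> bi ` b ` S = S"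
  using bi_b by (force simp: image_def)

lemma bi_A: "bi ` A = Bi"
  using bi_image_b_image[OF Bi_subset_circle] b_Bi by simp

lemma X_subset_circle: "X \<subseteq> circle"
  using A_subset_circle B_subset_circle Bi_subset_circle X_def by auto

lemma closed_X: "closed X"
  using closed_A closed_B closed_Bi X_def by auto

lemma not_connected_X: "\<not> connected X"
proof -
  have "A \<noteq> {}" "B \<union> Bi \<noteq> {}"
    using union_of_closed_arcs union_of_closed_arcs_nonempty k_ge_1 by auto
  moreover have "closed (B \<union> Bi)" "A \<inter> (B \<union> Bi) = {}"
    using closed_B closed_Bi disjoint by auto
  ultimately have "\<exists>e1 e2. closed e1 \<and> closed e2 \<and> X \<subseteq> e1 \<union> e2 \<and> e1 \<inter> e2 \<inter> X = {} \<and>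
      e1 \<inter> X \<noteq> {} \<and> e2 \<inter> X \<noteq> {}"
    using closed_A by (intro exI[of _ A] exI[of _ "B \<union> Bi"]) (auto simp: X_def)
  then show ?thesis unfolding connected_closed by blast
qed

lemma b_X: "b ` X = X"
  unfolding X_def image_Un b_A b_B b_Bi by auto

lemma bi_X: "bi ` X = X"
  using bi_image_b_image[OF X_subset_circle] b_X by simp

lemma continuous_on_b: "continuous_on circle b"
  by (rule continuous_on_circle_homeo_plus[OF homeo_plus_b])

lemma continuous_on_bi: "continuous_on circle bi"
proof -
  have "continuous_on circle (b \<circ> b)"
    by (rule continuous_on_compose[OF continuous_on_b])
      (rule continuous_on_subset[OF continuous_on_b], use b_in_circle in auto)
  then show ?thesis
    by (rule continuous_on_cong[THEN iffD1, rotated -1]) (auto simp: bi_eq)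
qed

lemma b_image_compl: "b ` (circle - X) \<subseteq> circle - X"
  and bi_image_compl: "bi ` (circle - X) \<subseteq> circle - X"
  using b_X bi_X b_bi bi_b b_in_circle bi_in_circle by (force simp: image_def)+

lemma b_gap: "G \<in> gaps X \<Longrightarrow> b ` G \<in> gaps X"
  unfolding gaps_def
  by (rule image_in_components[OF continuous_on_b continuous_on_bi b_image_compl bi_image_compl _ bi_b b_bi])
    auto

lemma bi_gap: "G \<in> gaps X \<Longrightarrow> bi ` G \<in> gaps X"
  unfolding gaps_def
  by (rule image_in_components[OF continuous_on_bi continuous_on_b bi_image_compl b_image_compl _ b_bi bi_b])
    auto

lemma components_X: "E \<in> components X \<Longrightarrow> E \<in> components A \<or> E \<in> components B \<or> E \<in> components Bi"
  using components_Un_closed[of "A \<union> B" Bi E] components_Un_closed[of A B]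
    closed_A closed_B closed_Bi disjoint unfolding X_def by (metis Int_Un_distrib2 Un_empty closed_Un)

lemma consecutive_different_types:
  "consecutive X C D \<Longrightarrow> \<not> (C \<in> components A \<and> D \<in> components A) \<and>
      \<not> (C \<in> components B \<and> D \<in> components B) \<and> \<not> (C \<in> components Bi \<and> D \<in> components Bi)"
  using markov_system unfolding markov_system_def X_def by blast

lemma principal_or_complementary_gap:
  assumes G: "G \<in> gaps X"
  shows "principal_gap A B Bi G \<or> complementary_gap A B Bi G"
proof -
  obtain C D where CD: "C \<in> components X" "D \<in> components X" "C \<noteq> D"
    "closure G \<inter> C \<noteq> {}" "closure G \<inter> D \<noteq> {}"
    using gap_between_components[OF X_subset_circle closed_X not_connected_X, of G] G
    unfolding gaps_def by metis
  have between: "between G C D" "between G D C" using CD unfolding between_def by auto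
  have "consecutive X C D" unfolding consecutive_def using CD between G by blast
  note types = consecutive_different_types[OF this]
  have "G \<in> gaps (A \<union> B \<union> Bi)" using G X_def by simp
  with components_X[OF CD(1)] components_X[OF CD(2)] types between show ?thesis
    unfolding principal_gap_def complementary_gap_def by blast
qed

lemma principal_gap_in_gaps: "J \<in> principal_gaps \<Longrightarrow> J \<in> gaps X"
  unfolding principal_gaps_def principal_gap_def X_def by auto

lemma principal_gap_subset: "J \<in> principal_gaps \<Longrightarrow> J \<subseteq> circle - X"
  using principal_gap_in_gaps unfolding gaps_def using in_components_subset by blast

lemma principal_gap_nonempty: "J \<in> principal_gaps \<Longrightarrow> J \<noteq> {}"
  using principal_gap_in_gaps unfolding gaps_def using in_components_nonempty by blast

lemma b_or_bi_principal_gap: "J \<in> principal_gaps \<Longrightarrow> (b ` J \<in> principal_gaps) \<noteq> (bi ` J \<in> principal_gaps)"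
  using markov_system unfolding markov_system_def principal_gaps_def by blast

lemma a_Z_subset_A: "a ` Z \<subseteq> A"
proof
  fix w assume "w \<in> a ` Z"
  then obtain z where z: "z \<in> circle" "z \<notin> A" "z \<notin> \<Union>principal_gaps" "w = a z"
    unfolding Z_def by blast
  have "z \<in> bblocks_union A B Bi"
  proof (cases "z \<in> X")
    case True
    then show ?thesis using z unfolding X_def bblocks_union_def by auto
  next
    case False
    then obtain G where G: "G \<in> gaps X" "z \<in> G"
      using z Union_components[of "circle - X"] unfolding gaps_def by blast
    then have "complementary_gap A B Bi G"
      using principal_or_complementary_gap z unfolding principal_gaps_def by blast
    then show ?thesis using G unfolding bblocks_union_def by blast
  qed
  then obtain y where "y \<in> A" "z = a y"
    using a_A by (metis imageE)
  then show "w \<in> A" using z a_a A_subset_circle by auto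
qed

lemma b_A_subset_Z: "b ` A \<subseteq> Z" and bi_A_subset_Z: "bi ` A \<subseteq> Z"
  using b_A bi_A B_subset_circle Bi_subset_circle disjoint principal_gap_subset
  unfolding Z_def X_def by blast+

lemma leave_principal_gaps:
  assumes "J \<in> principal_gaps" "c = b \<or> c = bi" "c ` J \<notin> principal_gaps"
  shows "c ` J \<subseteq> Z"
proof
  fix w assume w: "w \<in> c ` J"
  have gap: "c ` J \<in> gaps X" using assms(1,2) b_gap bi_gap principal_gap_in_gaps by blast
  then have "w \<in> circle - X" using w unfolding gaps_def using in_components_subset by blast
  moreover have "w \<notin> J'" if "J' \<in> principal_gaps" for J'
    using components_eq[of "c ` J" "circle - X" J'] gap principal_gap_in_gaps[OF that] w assms(3) that
    unfolding gaps_def by blast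
  ultimately show "w \<in> Z" unfolding Z_def X_def by blast
qed

end

section \<open>Words in the generators\<close>

datatype letter = La | Lb | Lbi

fun letter_map :: "(complex \<Rightarrow> complex) \<Rightarrow> (complex \<Rightarrow> complex) \<Rightarrow> letter \<Rightarrow> complex \<Rightarrow> complex" where
  "letter_map a b La = a"
| "letter_map a b Lb = b"
| "letter_map a b Lbi = inv_into circle b"

fun letter_inv :: "letter \<Rightarrow> letter" where
  "letter_inv La = La"
| "letter_inv Lb = Lbi"
| "letter_inv Lbi = Lb"

text \<open>A word acts by applying its last letter first.\<close>

fun word_map :: "(complex \<Rightarrow> complex) \<Rightarrow> (complex \<Rightarrow> complex) \<Rightarrow> letter list \<Rightarrow> complex \<Rightarrow> complex" where
  "word_map a b [] = id"
| "word_map a b (x # w) = letter_map a b x \<circ> word_map a b w"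

definition word_inv :: "letter list \<Rightarrow> letter list" where
  "word_inv w = rev (map letter_inv w)"

text \<open>Reduced words of the free product \<open>\<int>/2 * \<int>/3\<close>: \<open>a\<close> alternates with \<open>b\<^sup>\<plusminus>\<^sup>1\<close>.\<close>

fun alternating :: "letter list \<Rightarrow> bool" where
  "alternating (x # y # w) \<longleftrightarrow> (x = La) \<noteq> (y = La) \<and> alternating (y # w)"
| "alternating _ \<longleftrightarrow> True"

fun cons_reduce :: "letter \<Rightarrow> letter list \<Rightarrow> letter list" where
  "cons_reduce La (La # w) = w"
| "cons_reduce Lb (Lb # w) = Lbi # w"
| "cons_reduce Lb (Lbi # w) = w"
| "cons_reduce Lbi (Lbi # w) = Lb # w"
| "cons_reduce Lbi (Lb # w) = w"
| "cons_reduce x w = x # w"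

lemma letter_inv_letter_inv [simp]: "letter_inv (letter_inv x) = x"
  by (cases x) auto

lemma letter_inv_eq_La_iff [simp]: "letter_inv x = La \<longleftrightarrow> x = La"
  by (cases x) auto

lemma letter_inv_neq: "x \<noteq> La \<Longrightarrow> letter_inv x \<noteq> x"
  by (cases x) auto

lemma word_inv_Cons: "word_inv (x # w) = word_inv w @ [letter_inv x]"
  by (simp add: word_inv_def)

lemma word_inv_word_inv [simp]: "word_inv (word_inv w) = w"
  by (simp add: word_inv_def rev_map comp_def)

lemma alternating_ConsD: "alternating (x # w) \<Longrightarrow> alternating w"
  by (cases w) auto

lemma word_map_Cons_image: "word_map a b (x # w) ` S = letter_map a b x ` word_map a b w ` S"
  by (simp add: image_comp)

lemma word_map_append: "word_map a b (u @ v) = word_map a b u \<circ> word_map a b v"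
  by (induction u) auto

lemma word_map_in_gen_group: "word_map a b w \<in> gen_group a b"
proof (induction w)
  case Nil
  then show ?case using gen_group.gen_id by (simp add: id_def)
next
  case (Cons x w)
  then have "letter_map a b x \<circ> word_map a b w \<in> gen_group a b"
    by (cases x) (simp_all add: gen_group.gen_a gen_group.gen_b gen_group.gen_binv)
  then show ?case by (simp only: word_map.simps)
qed

context markov
begin

lemma letter_map_in_circle: "z \<in> circle \<Longrightarrow> letter_map a b x z \<in> circle"
  by (cases x) (auto simp: a_in_circle b_in_circle bi_in_circle)

lemma word_map_in_circle: "z \<in> circle \<Longrightarrow> word_map a b w z \<in> circle"
  by (induction w) (auto simp: letter_map_in_circle)

lemma letter_map_letter_inv: "z \<in> circle \<Longrightarrow> letter_map a b (letter_inv x) (letter_map a b x z) = z"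
  by (cases x) (auto simp: a_a bi_b b_bi)

lemma word_map_word_inv: "z \<in> circle \<Longrightarrow> word_map a b (word_inv w) (word_map a b w z) = z"
  by (induction w arbitrary: z)
    (simp_all add: word_inv_def word_map_append letter_map_letter_inv word_map_in_circle)

lemma word_map_image_word_inv:
  assumes "S \<subseteq> circle"
  shows "word_map a b (word_inv w) ` word_map a b w ` S = S"
proof -
  have "word_map a b (word_inv w) ` word_map a b w ` S = id ` S"
    unfolding image_image using assms word_map_word_inv by (intro image_cong) auto
  then show ?thesis by simp
qed

lemma letter_map_image_letter_inv:
  assumes "S \<subseteq> circle"
  shows "letter_map a b (letter_inv x) ` letter_map a b x ` S = S"
  using word_map_image_word_inv[OF assms, of "[x]"] by (simp add: word_inv_def)

lemma alternating_cons_reduce: "alternating w \<Longrightarrow> alternating (cons_reduce x w)"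
proof (cases w)
  case (Cons y w')
  moreover assume "alternating w"
  moreover have "alternating w'" using calculation alternating_ConsD by blast
  ultimately show ?thesis by (cases x; cases y; cases w') auto
qed (cases x; simp)

lemma word_map_cons_reduce:
  "z \<in> circle \<Longrightarrow> word_map a b (cons_reduce x w) z = letter_map a b x (word_map a b w z)"
proof (cases w)
  case (Cons y w')
  moreover assume "z \<in> circle"
  then have "word_map a b w' z \<in> circle" by (rule word_map_in_circle)
  ultimately show ?thesis by (cases x; cases y) (auto simp: a_a bi_eq b_in_circle b_b_b)
qed (cases x; simp)

lemma gen_group_alternating_word:
  "g \<in> gen_group a b \<Longrightarrow> \<exists>w. alternating w \<and> (\<forall>z\<in>circle. g z = word_map a b w z)"
proof (induction rule: gen_group.induct)
  case gen_id
  show ?case by (intro exI[of _ "[]"]) auto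
next
  case (gen_a g)
  then obtain w where "alternating w" "\<forall>z\<in>circle. g z = word_map a b w z" by blast
  then show ?case
    by (intro exI[of _ "cons_reduce La w"]) (auto simp: alternating_cons_reduce word_map_cons_reduce)
next
  case (gen_b g)
  then obtain w where "alternating w" "\<forall>z\<in>circle. g z = word_map a b w z" by blast
  then show ?case
    by (intro exI[of _ "cons_reduce Lb w"]) (auto simp: alternating_cons_reduce word_map_cons_reduce)
next
  case (gen_ainv g)
  then obtain w where "alternating w" "\<forall>z\<in>circle. g z = word_map a b w z" by blast
  then show ?case
    by (intro exI[of _ "cons_reduce La w"])
      (auto simp: alternating_cons_reduce word_map_cons_reduce inv_into_a word_map_in_circle)
next
  case (gen_binv g)
  then obtain w where "alternating w" "\<forall>z\<in>circle. g z = word_map a b w z" by blast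
  then show ?case
    by (intro exI[of _ "cons_reduce Lbi w"]) (auto simp: alternating_cons_reduce word_map_cons_reduce)
qed

end

lemma restrict_funpow_BijGroup:
  assumes "bij_betw f S S"
  shows "restrict (f ^^ n) S = restrict f S [^]\<^bsub>BijGroup S\<^esub> n"
proof (induction n)
  case 0
  show ?case by (simp add: BijGroup_def id_def)
next
  case (Suc n)
  interpret group "BijGroup S" by (rule group_BijGroup)
  have f: "restrict f S \<in> carrier (BijGroup S)"
    using assms by (simp add: BijGroup_def Bij_def)
  have fn: "restrict (f ^^ n) S \<in> carrier (BijGroup S)"
    unfolding Suc.IH using f by (rule nat_pow_closed)
  have "restrict f S [^]\<^bsub>BijGroup S\<^esub> Suc n = restrict (f ^^ n) S \<otimes>\<^bsub>BijGroup S\<^esub> restrict f S"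
    unfolding nat_pow_Suc Suc.IH ..
  also have "\<dots> = compose S (restrict (f ^^ n) S) (restrict f S)"
    using f fn by (simp add: BijGroup_def)
  also have "\<dots> = restrict (f ^^ Suc n) S"
    unfolding compose_def using bij_betwE[OF assms] by (intro restrict_ext) (simp add: funpow_swap1)
  finally show ?case ..
qed

lemma restrict_int_pow_BijGroup:
  assumes f: "bij_betw f circle circle"
  shows "restrict (int_pow f n) circle = restrict f circle [^]\<^bsub>BijGroup circle\<^esub> n"
proof -
  interpret group "BijGroup circle" by (rule group_BijGroup)
  have f_Bij: "restrict f circle \<in> carrier (BijGroup circle)"
    using f by (simp add: Bij_def BijGroup_def)
  show ?thesis
  proof (cases "0 \<le> n")
    case True
    then show ?thesis
      using restrict_funpow_BijGroup[OF f, of "nat n"] int_pow_int[of _ "nat n"]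
      by (simp add: Defs.int_pow_def)
  next
    case False
    have inv: "inv\<^bsub>BijGroup circle\<^esub> (restrict f circle) = restrict (inv_into circle f) circle"
    proof -
      have "inv_into circle (restrict f circle) y = inv_into circle f y" if "y \<in> circle" for y
        using that f bij_betw_imp_inj_on[OF f]
        by (intro inv_into_f_eq) (auto simp: bij_betw_def inj_on_def f_inv_into_f inv_into_into)
      moreover have "restrict f circle \<in> Bij circle" using f_Bij by (simp add: BijGroup_def)
      ultimately show ?thesis
        by (simp add: inv_BijGroup cong: restrict_cong)
    qed
    have "restrict f circle [^]\<^bsub>BijGroup circle\<^esub> n
        = (inv\<^bsub>BijGroup circle\<^esub> restrict f circle) [^]\<^bsub>BijGroup circle\<^esub> nat (- n)"
      using False f_Bij int_pow_neg_int[of _ "nat (- n)"] nat_pow_inv[of _ "nat (- n)"] by simp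
    then show ?thesis
      using False inv restrict_funpow_BijGroup[OF bij_betw_inv_into[OF f], of "nat (- n)"]
      by (simp add: Defs.int_pow_def)
  qed
qed

lemma (in group) inj_int_pow:
  assumes "x \<in> carrier G" "\<And>n::nat. 0 < n \<Longrightarrow> x [^] n \<noteq> \<one>"
  shows "inj (\<lambda>i::int. x [^] i)"
  using finite_cyclic_subgroup[OF assms(1)] infinite_cyclic_subgroup_int[OF assms(1)] assms(2)
  by (auto intro: inj_onI)

section \<open>Walking along the chain of principal gaps\<close>

primrec letters_up :: "(int \<Rightarrow> 'a) \<Rightarrow> int \<Rightarrow> nat \<Rightarrow> 'a list" where
  "letters_up f q 0 = []"
| "letters_up f q (Suc m) = f (q + int m) # letters_up f q m"

primrec letters_down :: "(int \<Rightarrow> 'a) \<Rightarrow> int \<Rightarrow> nat \<Rightarrow> 'a list" where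
  "letters_down f q 0 = []"
| "letters_down f q (Suc m) = f (q - int m) # letters_down f q m"

lemma letters_up_add: "letters_up f q (m + n) = letters_up f (q + int m) n @ letters_up f q m"
  by (induction n) (auto simp: algebra_simps)

lemma letters_down_add: "letters_down f q (m + n) = letters_down f (q - int m) n @ letters_down f q m"
  by (induction n) (auto simp: algebra_simps)

lemma last_letters_up: "last (letters_up f q (Suc m)) = f q"
  by (induction m) auto

lemma last_letters_down: "last (letters_down f q (Suc m)) = f q"
  by (induction m) auto

locale markov_chain = markov +
  fixes I I' :: "nat \<Rightarrow> complex set" and bs :: "nat \<Rightarrow> complex \<Rightarrow> complex"
  assumes enum: "{J. principal_gap A B Bi J} = I ` {..<k} \<union> I' ` {..<k}"
    and inj_I: "inj_on I {..<k}" and inj_I': "inj_on I' {..<k}"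
    and disjoint_I_I': "I ` {..<k} \<inter> I' ` {..<k} = {}"
    and bs: "\<forall>i<k. bs i \<in> {b, inv_into circle b} \<and> bs i ` I i = I' i \<and> a ` I' i = I (Suc i mod k)"
begin

text \<open>The paper's cycle \<open>I\<^sub>1, I\<^sub>1', \<dots>, I\<^sub>k, I\<^sub>k'\<close> of principal gaps (here \<open>I 0, I' 0, \<dots>\<close>) indexed
  by the integers modulo \<open>2k\<close>: \<open>chain_gap (2i) = I i\<close> and \<open>chain_gap (2i+1) = I' i\<close>. The letter
  \<open>fwd_letter p\<close> moves \<open>chain_gap p\<close> one step forward and \<open>bwd_letter p\<close> one step back.\<close>

definition pos :: "int \<Rightarrow> nat" where
  "pos p = nat (p mod (2 * int k))"

definition chain_gap :: "int \<Rightarrow> complex set" where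
  "chain_gap p = (if even (pos p) then I (pos p div 2) else I' (pos p div 2))"

definition b_letter :: "nat \<Rightarrow> letter" where
  "b_letter i = (if bs i = b then Lb else Lbi)"

definition fwd_letter :: "int \<Rightarrow> letter" where
  "fwd_letter p = (if even (pos p) then b_letter (pos p div 2) else La)"

definition bwd_letter :: "int \<Rightarrow> letter" where
  "bwd_letter p = letter_inv (fwd_letter (p - 1))"

abbreviation "fwd_walk \<equiv> letters_up fwd_letter"
abbreviation "bwd_walk \<equiv> letters_down bwd_letter"

lemma pos_less: "pos p < 2 * k"
  using k_ge_1 unfolding pos_def by (simp add: nat_less_iff)

lemma of_nat_pos: "int (pos p) = p mod (2 * int k)"
  using k_ge_1 unfolding pos_def by simp

lemma pos_of_nat: "j < 2 * k \<Longrightarrow> pos (int j) = j"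
  unfolding pos_def by (simp add: zmod_int)

lemma pos_add_1: "pos (p + 1) = Suc (pos p) mod (2 * k)"
proof -
  have "(p + 1) mod (2 * int k) = (int (pos p) + 1) mod int (2 * k)"
    by (simp add: of_nat_pos mod_add_left_eq)
  also have "\<dots> = int (Suc (pos p) mod (2 * k))"
    by (simp add: zmod_int add.commute)
  finally show ?thesis unfolding pos_def by simp
qed

lemma pos_eq_0_iff: "pos p = 0 \<longleftrightarrow> 2 * int k dvd p"
  using of_nat_pos[of p] by (metis dvd_eq_mod_eq_0 of_nat_eq_0_iff)

lemma pos_add_period: "pos (p + 2 * int k * n) = pos p"
  unfolding pos_def by simp

lemma even_pos_iff: "even (pos p) \<longleftrightarrow> even p"
proof -
  have "p = int (pos p) + 2 * (int k * (p div (2 * int k)))"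
    using div_mult_mod_eq[of p "2 * int k"] by (simp add: of_nat_pos algebra_simps)
  then show ?thesis by (metis even_add even_mult_iff even_numeral even_of_nat)
qed

lemma b_letter_neq_La: "b_letter i \<noteq> La"
  by (simp add: b_letter_def)

lemma letter_map_b_letter: "i < k \<Longrightarrow> letter_map a b (b_letter i) = bs i"
  using bs by (auto simp: b_letter_def)

lemma fwd_letter_eq_La_iff: "fwd_letter p = La \<longleftrightarrow> odd p"
  by (simp add: fwd_letter_def even_pos_iff b_letter_neq_La)

lemma bwd_letter_eq_La_iff: "bwd_letter p = La \<longleftrightarrow> even p"
  by (simp add: bwd_letter_def fwd_letter_eq_La_iff)

lemma fwd_letter_add_period: "fwd_letter (p + 2 * int k * n) = fwd_letter p"
  unfolding fwd_letter_def pos_add_period ..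

lemma bwd_letter_add_period: "bwd_letter (p + 2 * int k * n) = bwd_letter p"
  using fwd_letter_add_period[of "p - 1" n] by (simp add: bwd_letter_def algebra_simps)

lemma chain_gap_add_period: "chain_gap (p + 2 * int k * n) = chain_gap p"
  unfolding chain_gap_def pos_add_period ..

lemma chain_gap_principal: "chain_gap p \<in> principal_gaps"
  using enum pos_less[of p] unfolding chain_gap_def principal_gaps_def by auto

lemma chain_gap_subset_circle: "chain_gap p \<subseteq> circle"
  using principal_gap_subset[OF chain_gap_principal] by blast

lemma I_neq_I': "i < k \<Longrightarrow> j < k \<Longrightarrow> I i \<noteq> I' j"
  using disjoint_I_I' by blast

lemma chain_gap_eq_imp_pos_eq:
  assumes "chain_gap p = chain_gap q"
  shows "pos p = pos q"
proof -
  have "pos p div 2 < k" "pos q div 2 < k" using pos_less[of p] pos_less[of q] by auto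
  then have "even (pos p) = even (pos q) \<and> pos p div 2 = pos q div 2"
    using assms inj_onD[OF inj_I] inj_onD[OF inj_I'] I_neq_I' I_neq_I'[symmetric]
    unfolding chain_gap_def by (auto split: if_splits)
  then show ?thesis by (metis dvd_mult_div_cancel mult_div_mod_eq odd_two_times_div_two_succ)
qed

lemma fwd_letter_chain_gap: "letter_map a b (fwd_letter p) ` chain_gap p = chain_gap (p + 1)"
proof -
  define i where "i = pos p div 2"
  have i: "i < k" using pos_less[of p] unfolding i_def by simp
  have step: "bs i ` I i = I' i" "a ` I' i = I (Suc i mod k)" using bs i by auto
  show ?thesis
  proof (cases "even (pos p)")
    case True
    then have "pos p = 2 * i" unfolding i_def by simp
    moreover have "pos (p + 1) = Suc (2 * i)"
      using calculation i pos_add_1[of p] by simp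
    ultimately show ?thesis
      using step i by (simp add: fwd_letter_def chain_gap_def letter_map_b_letter)
  next
    case False
    then have "pos p = Suc (2 * i)" unfolding i_def by simp
    moreover have "pos (p + 1) = 2 * (Suc i mod k)"
      using calculation pos_add_1[of p] by (simp add: mult_mod_right)
    ultimately show ?thesis
      using step by (simp add: fwd_letter_def chain_gap_def)
  qed
qed

lemma bwd_letter_chain_gap: "letter_map a b (bwd_letter p) ` chain_gap p = chain_gap (p - 1)"
proof -
  have "chain_gap p = letter_map a b (fwd_letter (p - 1)) ` chain_gap (p - 1)"
    using fwd_letter_chain_gap[of "p - 1"] by simp
  then show ?thesis
    unfolding bwd_letter_def using letter_map_image_letter_inv[OF chain_gap_subset_circle] by metis
qed

lemma leave_chain:
  assumes "x \<notin> {fwd_letter p, bwd_letter p}"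
  shows "x \<noteq> La" "letter_map a b x ` chain_gap p \<subseteq> Z"
proof -
  obtain y where y: "y \<in> {fwd_letter p, bwd_letter p}" "y \<noteq> La" "La \<in> {fwd_letter p, bwd_letter p}"
    using fwd_letter_eq_La_iff[of p] bwd_letter_eq_La_iff[of p] by (cases "even p") auto
  show "x \<noteq> La" using assms y(3) by blast
  have "letter_map a b y ` chain_gap p \<in> principal_gaps"
    using y(1) fwd_letter_chain_gap bwd_letter_chain_gap chain_gap_principal by auto
  then have "(x = Lb \<and> y = Lbi \<and> b ` chain_gap p \<notin> principal_gaps) \<or>
      (x = Lbi \<and> y = Lb \<and> bi ` chain_gap p \<notin> principal_gaps)"
    using assms y b_or_bi_principal_gap[OF chain_gap_principal, of p] by (cases x; cases y) auto
  then show "letter_map a b x ` chain_gap p \<subseteq> Z"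
    using leave_principal_gaps[OF chain_gap_principal, of b p]
      leave_principal_gaps[OF chain_gap_principal, of bi p] by (elim disjE) simp_all
qed

lemma fwd_walk_chain_gap: "word_map a b (fwd_walk q m) ` chain_gap q = chain_gap (q + int m)"
proof (induction m)
  case (Suc m)
  then show ?case
    unfolding letters_up.simps word_map_Cons_image Suc.IH fwd_letter_chain_gap by (simp add: algebra_simps)
qed simp

lemma bwd_walk_chain_gap: "word_map a b (bwd_walk q m) ` chain_gap q = chain_gap (q - int m)"
proof (induction m)
  case (Suc m)
  then show ?case
    unfolding letters_down.simps word_map_Cons_image Suc.IH bwd_letter_chain_gap by (simp add: algebra_simps)
qed simp

lemma fwd_walk_add_period: "fwd_walk (q + 2 * int k * n) m = fwd_walk q m"
  by (induction m) (simp_all add: fwd_letter_add_period[of "q + int _" n, symmetric] algebra_simps)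

lemma bwd_walk_add_period: "bwd_walk (q + 2 * int k * n) m = bwd_walk q m"
  by (induction m) (simp_all add: bwd_letter_add_period[of "q - int _" n, symmetric] algebra_simps)

lemma bwd_walk_eq_word_inv: "bwd_walk (q + int m) m = word_inv (fwd_walk q m)"
proof (induction m)
  case (Suc m)
  have "bwd_walk (q + int (Suc m)) (Suc m) = bwd_walk (q + int m) m @ [bwd_letter (q + int (Suc m))]"
    using letters_down_add[of bwd_letter "q + int (Suc m)" 1 m] by simp
  moreover have "bwd_letter (q + int (Suc m)) = letter_inv (fwd_letter (q + int m))"
    by (simp add: bwd_letter_def)
  ultimately show ?case
    using Suc.IH by (simp add: word_inv_Cons)
qed (simp add: word_inv_def)

lemma alternating_fwd_walk: "alternating (fwd_walk q m)"
proof (induction m)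
  case (Suc m)
  then show ?case
    by (cases m) (auto simp: fwd_letter_eq_La_iff)
qed simp

lemma markov_word_eq_fwd_walk: "j \<le> k \<Longrightarrow> markov_word a bs j = word_map a b (fwd_walk 0 (2 * j))"
proof (induction j)
  case (Suc j)
  have "fwd_letter (int (2 * j)) = b_letter j"
    using Suc.prems pos_of_nat[of "2 * j"] by (simp add: fwd_letter_def)
  moreover have "fwd_letter (int (Suc (2 * j))) = La"
    by (simp add: fwd_letter_eq_La_iff)
  ultimately show ?case
    using Suc letter_map_b_letter[of j] by (simp add: o_assoc)
qed simp

end

section \<open>Ping-pong\<close>

context markov
begin

definition zone :: "letter \<Rightarrow> complex set" where
  "zone x = (if x = La then A else Z)"

lemma letter_map_zone: "(x = La) \<noteq> (y = La) \<Longrightarrow> letter_map a b x ` zone y \<subseteq> zone x"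
  using a_Z_subset_A b_A_subset_Z bi_A_subset_Z by (cases x) (auto simp: zone_def)

lemma principal_gap_disjoint_zone: "J \<in> principal_gaps \<Longrightarrow> J \<inter> zone x = {}"
  using principal_gap_subset[of J] unfolding zone_def Z_def X_def by auto

end

context markov_chain
begin

lemma chain_gap_0: "chain_gap 0 = I 0"
  by (simp add: chain_gap_def pos_def)

lemma extend_fwd_walk:
  assumes "alternating (x # fwd_walk q m)"
  shows "(\<exists>m'. x # fwd_walk q m = fwd_walk q m') \<or> (\<exists>m'. x # fwd_walk q m = bwd_walk q m') \<or>
    (x # fwd_walk q m \<noteq> [] \<and> word_map a b (x # fwd_walk q m) ` chain_gap q \<subseteq> zone (hd (x # fwd_walk q m)))"
proof -
  let ?p = "q + int m"
  consider "x = fwd_letter ?p" | "x = bwd_letter ?p" | "x \<notin> {fwd_letter ?p, bwd_letter ?p}" by blast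
  then show ?thesis
  proof cases
    case 1
    then show ?thesis by (intro disjI1 exI[of _ "Suc m"]) simp
  next
    case 2
    text \<open>Going back is excluded by alternation unless the walk is empty.\<close>
    then have "m = 0"
      using assms by (cases m) (auto simp: bwd_letter_def)
    then show ?thesis using 2 by (intro disjI2 disjI1 exI[of _ 1]) simp
  next
    case 3
    have "word_map a b (x # fwd_walk q m) ` chain_gap q \<subseteq> Z"
      unfolding word_map_Cons_image fwd_walk_chain_gap by (rule leave_chain(2)[OF 3])
    moreover have "zone (hd (x # fwd_walk q m)) = Z"
      using leave_chain(1)[OF 3] by (simp add: zone_def)
    ultimately show ?thesis by (metis list.distinct(1))
  qed
qed

lemma extend_bwd_walk:
  assumes "alternating (x # bwd_walk q m)"
  shows "(\<exists>m'. x # bwd_walk q m = fwd_walk q m') \<or> (\<exists>m'. x # bwd_walk q m = bwd_walk q m') \<or>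
    (x # bwd_walk q m \<noteq> [] \<and> word_map a b (x # bwd_walk q m) ` chain_gap q \<subseteq> zone (hd (x # bwd_walk q m)))"
proof -
  let ?p = "q - int m"
  consider "x = bwd_letter ?p" | "x = fwd_letter ?p" | "x \<notin> {fwd_letter ?p, bwd_letter ?p}" by blast
  then show ?thesis
  proof cases
    case 1
    then show ?thesis by (intro disjI2 disjI1 exI[of _ "Suc m"]) simp
  next
    case 2
    then have "m = 0"
      using assms by (cases m) (auto simp: bwd_letter_def algebra_simps)
    then show ?thesis using 2 by (intro disjI1 exI[of _ 1]) simp
  next
    case 3
    have "word_map a b (x # bwd_walk q m) ` chain_gap q \<subseteq> Z"
      unfolding word_map_Cons_image bwd_walk_chain_gap by (rule leave_chain(2)[OF 3])
    moreover have "zone (hd (x # bwd_walk q m)) = Z"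
      using leave_chain(1)[OF 3] by (simp add: zone_def)
    ultimately show ?thesis by (metis list.distinct(1))
  qed
qed

lemma ping_pong:
  "alternating w \<Longrightarrow> (\<exists>m. w = fwd_walk q m) \<or> (\<exists>m. w = bwd_walk q m) \<or>
    (w \<noteq> [] \<and> word_map a b w ` chain_gap q \<subseteq> zone (hd w))"
proof (induction w)
  case Nil
  show ?case by (intro disjI1 exI[of _ 0]) simp
next
  case (Cons x w)
  consider (fwd) m where "w = fwd_walk q m" | (bwd) m where "w = bwd_walk q m"
    | (off) "w \<noteq> []" "word_map a b w ` chain_gap q \<subseteq> zone (hd w)"
    using Cons alternating_ConsD by blast
  then show ?case
  proof cases
    case fwd
    then show ?thesis using Cons.prems by (simp only:) (rule extend_fwd_walk)
  next
    case bwd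
    then show ?thesis using Cons.prems by (simp only:) (rule extend_bwd_walk)
  next
    case off
    then have "(x = La) \<noteq> (hd w = La)" using Cons.prems by (cases w) simp_all
    then have "letter_map a b x ` word_map a b w ` chain_gap q \<subseteq> zone x"
      using image_mono[OF off(2)] letter_map_zone by (metis subset_trans)
    then show ?thesis unfolding word_map_Cons_image by (metis list.sel(1) list.distinct(1))
  qed
qed

lemma stabilizing_walk:
  assumes "alternating w" "word_map a b w ` chain_gap q = chain_gap q"
  shows "(\<exists>m. w = fwd_walk q m) \<or> (\<exists>m. w = bwd_walk q m)"
proof -
  have "chain_gap q \<noteq> {}" "chain_gap q \<inter> zone x = {}" for x
    using principal_gap_nonempty principal_gap_disjoint_zone chain_gap_principal by auto
  then have "\<not> chain_gap q \<subseteq> zone x" for x by blast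
  then show ?thesis using ping_pong[OF assms(1), of q] assms(2) by metis
qed

lemma alternating_stabilizer_word:
  assumes "alternating w" "word_map a b w ` chain_gap 0 = chain_gap 0"
  shows "\<exists>n. w = fwd_walk 0 (2 * k * n) \<or> w = word_inv (fwd_walk 0 (2 * k * n))"
proof -
  have multiple: "\<exists>n. m = 2 * k * n" if "chain_gap p = chain_gap 0" "\<bar>p\<bar> = int m" for p m
  proof -
    have "pos p = 0" using chain_gap_eq_imp_pos_eq[OF that(1)] by (simp add: pos_def)
    then have "int (2 * k) dvd int m"
      using that(2) pos_eq_0_iff by (metis dvd_abs_iff of_nat_mult of_nat_numeral)
    then have "2 * k dvd m" by (simp only: int_dvd_int_iff)
    then show ?thesis by (auto elim: dvdE)
  qed
  consider (fwd) m where "w = fwd_walk 0 m" | (bwd) m where "w = bwd_walk 0 m"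
    using stabilizing_walk[OF assms] by blast
  then show ?thesis
  proof cases
    case fwd
    then have "chain_gap (int m) = chain_gap 0" using assms(2) fwd_walk_chain_gap[of 0 m] by simp
    then show ?thesis using fwd multiple[of "int m" m] by auto
  next
    case bwd
    then have "chain_gap (- int m) = chain_gap 0" using assms(2) bwd_walk_chain_gap[of 0 m] by simp
    then obtain n where n: "m = 2 * k * n" using multiple[of "- int m" m] by auto
    then have "w = bwd_walk (0 + 2 * int k * int n) m" using bwd by (simp only: bwd_walk_add_period)
    also have "\<dots> = word_inv (fwd_walk 0 m)"
      using bwd_walk_eq_word_inv[of 0 m] n by simp
    finally show ?thesis using n by blast
  qed
qed

lemma fwd_walk_moves_point:
  assumes "0 < m"
  shows "\<exists>z\<in>circle. word_map a b (fwd_walk 0 m) z \<noteq> z"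
proof (rule ccontr)
  assume "\<not> ?thesis"
  then have "word_map a b (fwd_walk 0 m) ` chain_gap 1 = id ` chain_gap 1"
    using chain_gap_subset_circle by (intro image_cong) auto
  then have "word_map a b (fwd_walk 0 m) ` chain_gap 1 = chain_gap 1" by simp
  then consider (fwd) m' where "fwd_walk 0 m = fwd_walk 1 m'" | (bwd) m' where "fwd_walk 0 m = bwd_walk 1 m'"
    using stabilizing_walk[OF alternating_fwd_walk] by blast
  moreover obtain m0 where m0: "m = Suc m0" using assms by (cases m) auto
  moreover have "fwd_letter 0 \<noteq> La" "fwd_letter 1 = La"
    by (simp_all add: fwd_letter_eq_La_iff)
  ultimately show False
  proof cases
    case fwd
    then obtain m1 where "m' = Suc m1" using m0 by (cases m') auto
    then show False
      using fwd m0 last_letters_up[of fwd_letter 0 m0] last_letters_up[of fwd_letter 1 m1]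
        \<open>fwd_letter 0 \<noteq> La\<close> \<open>fwd_letter 1 = La\<close> by simp
  next
    case bwd
    then obtain m1 where "m' = Suc m1" using m0 by (cases m') auto
    then show False
      using bwd m0 last_letters_up[of fwd_letter 0 m0] last_letters_down[of bwd_letter 1 m1]
        letter_inv_neq[OF \<open>fwd_letter 0 \<noteq> La\<close>] by (simp add: bwd_letter_def)
  qed
qed

end

section \<open>The stabilizer of the first principal gap\<close>

context markov
begin

definition word_perm :: "letter list \<Rightarrow> complex \<Rightarrow> complex" where
  "word_perm w = restrict (word_map a b w) circle"

lemma bij_betw_word_map: "bij_betw (word_map a b w) circle circle"
proof (rule bij_betw_byWitness[where f' = "word_map a b (word_inv w)"])
  show "\<forall>z\<in>circle. word_map a b w (word_map a b (word_inv w) z) = z"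
    using word_map_word_inv[of _ "word_inv w"] by simp
qed (auto simp: word_map_word_inv word_map_in_circle)

lemma word_perm_in_carrier: "word_perm w \<in> carrier (BijGroup circle)"
  using bij_betw_word_map by (simp add: word_perm_def BijGroup_def Bij_def)

lemma word_perm_append: "word_perm (u @ v) = word_perm u \<otimes>\<^bsub>BijGroup circle\<^esub> word_perm v"
proof -
  have "word_perm u \<otimes>\<^bsub>BijGroup circle\<^esub> word_perm v = compose circle (word_perm u) (word_perm v)"
    using word_perm_in_carrier by (simp add: BijGroup_def)
  also have "\<dots> = word_perm (u @ v)"
    unfolding compose_def word_perm_def
    by (intro restrict_ext) (simp add: word_map_append word_map_in_circle)
  finally show ?thesis ..
qed

lemma word_perm_word_inv: "word_perm (word_inv w) = inv\<^bsub>BijGroup circle\<^esub> word_perm w"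
proof -
  interpret group "BijGroup circle" by (rule group_BijGroup)
  have "word_perm (word_inv w) \<otimes>\<^bsub>BijGroup circle\<^esub> word_perm w = \<one>\<^bsub>BijGroup circle\<^esub>"
    unfolding word_perm_append[symmetric]
    by (auto simp: word_perm_def BijGroup_def word_map_append word_map_word_inv)
  then show ?thesis
    using word_perm_in_carrier by (intro inv_equality[symmetric]) auto
qed

end

context markov_chain
begin

abbreviation "f\<^sub>1 \<equiv> markov_word a bs k"

lemma restrict_f1: "restrict f\<^sub>1 circle = word_perm (fwd_walk 0 (2 * k))"
  using markov_word_eq_fwd_walk[of k] by (simp add: word_perm_def)

lemma word_perm_fwd_walk_power:
  "word_perm (fwd_walk 0 (2 * k * n)) = word_perm (fwd_walk 0 (2 * k)) [^]\<^bsub>BijGroup circle\<^esub> n"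
proof (induction n)
  case 0
  show ?case by (simp add: word_perm_def BijGroup_def id_def)
next
  case (Suc n)
  interpret group "BijGroup circle" by (rule group_BijGroup)
  have "fwd_walk 0 (2 * k * Suc n) = fwd_walk (0 + 2 * int k * 1) (2 * k * n) @ fwd_walk 0 (2 * k)"
    using letters_up_add[of fwd_letter 0 "2 * k" "2 * k * n"] by (simp add: algebra_simps)
  also have "fwd_walk (0 + 2 * int k * 1) (2 * k * n) = fwd_walk 0 (2 * k * n)"
    by (rule fwd_walk_add_period)
  finally show ?case
    using Suc.IH by (simp add: word_perm_append)
qed

lemma restrict_int_pow_f1:
  "restrict (int_pow f\<^sub>1 n) circle = word_perm (fwd_walk 0 (2 * k)) [^]\<^bsub>BijGroup circle\<^esub> n"
proof -
  have "bij_betw f\<^sub>1 circle circle"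
    using markov_word_eq_fwd_walk[of k] bij_betw_word_map by simp
  from restrict_int_pow_BijGroup[OF this] show ?thesis
    using restrict_f1 by simp
qed

lemma inj_restrict_int_pow_f1: "inj (\<lambda>n::int. restrict (int_pow f\<^sub>1 n) circle)"
proof -
  interpret group "BijGroup circle" by (rule group_BijGroup)
  have "word_perm (fwd_walk 0 (2 * k)) [^]\<^bsub>BijGroup circle\<^esub> n \<noteq> \<one>\<^bsub>BijGroup circle\<^esub>" if "0 < n" for n :: nat
  proof
    assume "word_perm (fwd_walk 0 (2 * k)) [^]\<^bsub>BijGroup circle\<^esub> n = \<one>\<^bsub>BijGroup circle\<^esub>"
    then have "restrict (word_map a b (fwd_walk 0 (2 * k * n))) circle = (\<lambda>z\<in>circle. z)"
      using word_perm_fwd_walk_power[of n] by (simp add: word_perm_def BijGroup_def)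
    then have "\<forall>z\<in>circle. word_map a b (fwd_walk 0 (2 * k * n)) z = z"
      by (metis restrict_apply')
    then show False
      using fwd_walk_moves_point[of "2 * k * n"] k_ge_1 that by auto
  qed
  then show ?thesis
    using inj_int_pow[OF word_perm_in_carrier] restrict_int_pow_f1 by simp
qed

lemma stabilizer_element_is_power:
  assumes "g \<in> gen_group a b" "g ` I 0 = I 0"
  shows "\<exists>n. restrict g circle = restrict (int_pow f\<^sub>1 n) circle"
proof -
  interpret group "BijGroup circle" by (rule group_BijGroup)
  obtain w where w: "alternating w" "\<forall>z\<in>circle. g z = word_map a b w z"
    using gen_group_alternating_word[OF assms(1)] by blast
  then have "word_map a b w ` chain_gap 0 = chain_gap 0"
    using assms(2) chain_gap_subset_circle[of 0] chain_gap_0 by (metis image_cong subsetD)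
  then obtain n where "w = fwd_walk 0 (2 * k * n) \<or> w = word_inv (fwd_walk 0 (2 * k * n))"
    using alternating_stabilizer_word[OF w(1)] by blast
  then have "word_perm w = word_perm (fwd_walk 0 (2 * k)) [^]\<^bsub>BijGroup circle\<^esub> int n \<or>
      word_perm w = word_perm (fwd_walk 0 (2 * k)) [^]\<^bsub>BijGroup circle\<^esub> (- int n)"
    using word_perm_in_carrier
    by (auto simp: word_perm_word_inv word_perm_fwd_walk_power int_pow_int int_pow_neg_int)
  moreover have "restrict g circle = word_perm w"
    using w(2) unfolding word_perm_def by (intro restrict_ext) simp
  ultimately show ?thesis
    using restrict_int_pow_f1 by metis
qed

lemma power_in_stabilizer:
  "\<exists>g\<in>gen_group a b. g ` I 0 = I 0 \<and> restrict g circle = restrict (int_pow f\<^sub>1 n) circle"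
proof -
  interpret group "BijGroup circle" by (rule group_BijGroup)
  define w where "w = fwd_walk 0 (2 * k * nat \<bar>n\<bar>)"
  have stab: "word_map a b w ` I 0 = I 0"
    using fwd_walk_chain_gap[of 0 "2 * k * nat \<bar>n\<bar>"] chain_gap_add_period[of 0 "int (nat \<bar>n\<bar>)"]
    unfolding w_def chain_gap_0[symmetric] by simp
  have perm: "word_perm w = word_perm (fwd_walk 0 (2 * k)) [^]\<^bsub>BijGroup circle\<^esub> int (nat \<bar>n\<bar>)"
    unfolding w_def word_perm_fwd_walk_power int_pow_int ..
  show ?thesis
  proof (cases "0 \<le> n")
    case True
    then show ?thesis
      using stab perm restrict_int_pow_f1[of n] word_map_in_gen_group[of a b w]
      by (auto simp: word_perm_def)
  next
    case False
    have "word_map a b (word_inv w) ` I 0 = I 0"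
      using word_map_image_word_inv[OF chain_gap_subset_circle[of 0], of w] stab chain_gap_0 by simp
    moreover have "word_perm (word_inv w) = restrict (int_pow f\<^sub>1 n) circle"
      using False perm restrict_int_pow_f1[of n] int_pow_neg[OF word_perm_in_carrier, of _ "- n"]
      by (simp add: word_perm_word_inv)
    ultimately show ?thesis
      using word_map_in_gen_group[of a b "word_inv w"] by (auto simp: word_perm_def)
  qed
qed

end

theorem lemma11p3:
  fixes a b :: "complex \<Rightarrow> complex" and A B Bi :: "complex set" and k :: nat
    and I I' :: "nat \<Rightarrow> complex set" and bs :: "nat \<Rightarrow> complex \<Rightarrow> complex"
  assumes M: "markov_system a b A B Bi k"
    and enum: "{J. principal_gap A B Bi J} = I ` {..<k} \<union> I' ` {..<k}"
    and injI: "inj_on I {..<k}" and injI': "inj_on I' {..<k}"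
    and disj: "I ` {..<k} \<inter> I' ` {..<k} = {}"
    and bs: "\<forall>i<k. bs i \<in> {b, inv_into circle b} \<and> bs i ` I i = I' i \<and> a ` I' i = I (Suc i mod k)"
  shows "(\<lambda>g. restrict g circle) ` {g \<in> gen_group a b. g ` I 0 = I 0}
           = range (\<lambda>n::int. restrict (int_pow (markov_word a bs k) n) circle)
       \<and> inj (\<lambda>n::int. restrict (int_pow (markov_word a bs k) n) circle)"
proof -
  interpret markov_chain a b A B Bi k I I' bs
    using assms by unfold_locales
  have "(\<lambda>g. restrict g circle) ` {g \<in> gen_group a b. g ` I 0 = I 0}
      \<subseteq> range (\<lambda>n::int. restrict (int_pow f\<^sub>1 n) circle)"
    using stabilizer_element_is_power by blast
  moreover have "range (\<lambda>n::int. restrict (int_pow f\<^sub>1 n) circle)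
      \<subseteq> (\<lambda>g. restrict g circle) ` {g \<in> gen_group a b. g ` I 0 = I 0}"
  proof
    fix h assume "h \<in> range (\<lambda>n::int. restrict (int_pow f\<^sub>1 n) circle)"
    then obtain n where "h = restrict (int_pow f\<^sub>1 n) circle" by blast
    moreover obtain g where "g \<in> gen_group a b" "g ` I 0 = I 0"
      "restrict g circle = restrict (int_pow f\<^sub>1 n) circle"
      using power_in_stabilizer by blast
    ultimately show "h \<in> (\<lambda>g. restrict g circle) ` {g \<in> gen_group a b. g ` I 0 = I 0}"
      by (intro image_eqI[of _ _ g]) auto
  qed
  ultimately show ?thesis
    using inj_restrict_int_pow_f1 by blast
qed

end
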